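(* Let $b,t\in(0,1/9)$ and let $\mathcal S_t=\{S_1,S_2,S_3\}$ be the system on $\mathbb R$ given by $S_1(x)=tx$, $S_2(x)=bx$, $S_3(x)=(x+8)/9$, with attractor $K$ and $K_3=S_3(K)$. The following are equivalent: (i) for all positive integers $m,n$, $S_1^m(K_3)\cap S_2^n(K_3)=\varnothing$; (ii) $K=\{0\}\cup\bigcup_{m,n\ge0}S_1^mS_2^n(K_3)$, where the sets $S_1^mS_2^n(K_3)$, $(m,n)\in(\mathbb N\cup\{0\})^2$, are pairwise disjoint; (iii) for all positive integers $m,n$, $S_1^m(K)\cap S_2^n(K)=S_1^mS_2^n(K)$.
   Context: The attractor is the unique nonempty compact set $K\subset\mathbb R$ with $K=S_1(K)\cup S_2(K)\cup S_3(K)$; $S^m$ denotes the $m$-fold composition. *)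

theory Defs
  imports "HOL-Analysis.Analysis"
begin

end

theory Submission
  imports Defs
begin

text \<open>The attractor lies in \<open>[0,1]\<close> and contains \<open>0\<close>, and \<open>K\<^sub>3 \<subseteq> [8/9,1]\<close>. Every nonzero
  point of \<open>K\<close> is therefore reached from \<open>K\<^sub>3\<close> by finitely many contractions \<open>S\<^sub>1, S\<^sub>2\<close>,
  and since they commute it has an address \<open>t\<^sup>m b\<^sup>n y\<close> with \<open>y \<in> K\<^sub>3\<close>. Any nontrivial product
  \<open>t\<^sup>a b\<^sup>c\<close> is below \<open>1/9\<close>, so it cannot map \<open>K\<^sub>3\<close> into \<open>K\<^sub>3\<close>; after cancelling common factors,
  two distinct addresses of one point thus force \<open>t\<^sup>a y = b\<^sup>c z\<close> with \<open>a, c > 0\<close>, which is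
  exactly what (i) forbids. Uniqueness of addresses is (ii), and it identifies
  \<open>S\<^sub>1\<^sup>m(K) \<inter> S\<^sub>2\<^sup>n(K)\<close> with \<open>S\<^sub>1\<^sup>m S\<^sub>2\<^sup>n(K)\<close>, giving (iii); conversely (ii) and (iii) both
  contain (i), the latter because \<open>S\<^sub>2\<^sup>n(K) \<subseteq> [0,1/9]\<close> misses \<open>K\<^sub>3\<close>.\<close>

lemma le_mult_self_imp_nonpos:
  fixes c x :: real
  assumes "c < 1" "x \<le> c * x"
  shows "x \<le> 0"
proof (rule ccontr)
  assume "\<not> x \<le> 0"
  then have "c * x < 1 * x"
    using assms(1) by (intro mult_strict_right_mono) auto
  then show False using assms(2) by simp
qed

lemma mult_self_le_imp_nonneg:
  fixes c x :: real
  assumes "c < 1" "c * x \<le> x"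
  shows "0 \<le> x"
  using le_mult_self_imp_nonpos[of c "- x"] assms by simp

lemma mult_powers_less:
  fixes t b c :: real
  assumes "0 \<le> t" "t < c" "0 \<le> b" "b < c" "c \<le> 1" "(m, n) \<noteq> (0, 0)"
  shows "t ^ m * b ^ n < c"
proof -
  have "t ^ m \<le> 1" "b ^ n \<le> 1"
    using assms by (simp_all add: power_le_one)
  show ?thesis
  proof (cases "m = 0")
    case True
    then have "b ^ n \<le> b"
      using assms by (simp add: power_le_one power_decreasing[of 1 n b, simplified])
    then show ?thesis using True assms by simp
  next
    case False
    then have "t ^ m \<le> t"
      using assms by (simp add: power_le_one power_decreasing[of 1 m t, simplified])
    then have "t ^ m * b ^ n \<le> t"
      using \<open>b ^ n \<le> 1\<close> assms by (metis mult_left_le order_trans zero_le_power)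
    then show ?thesis using assms by simp
  qed
qed

locale two_scaling_attractor =
  fixes t b :: real and K :: "real set"
  assumes t_pos: "0 < t" and t_small: "t < 1/9"
    and b_pos: "0 < b" and b_small: "b < 1/9"
    and compact_K: "compact K" and K_nonempty: "K \<noteq> {}"
    and self_similar: "K = (\<lambda>x. t * x) ` K \<union> (\<lambda>x. b * x) ` K \<union> (\<lambda>x. (x + 8) / 9) ` K"
begin

abbreviation K\<^sub>3 :: "real set" where
  "K\<^sub>3 \<equiv> (\<lambda>x. (x + 8) / 9) ` K"

lemma attractor_cases:
  assumes "x \<in> K"
  obtains y where "y \<in> K" "x = t * y" | y where "y \<in> K" "x = b * y" | "x \<in> K\<^sub>3"
  using assms self_similar by blast

lemma scaled_mem:
  assumes "x \<in> K"
  shows "t ^ m * (b ^ n * x) \<in> K"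
proof (induction m)
  case 0
  show ?case
    by (induction n) (use assms self_similar in \<open>auto simp: mult.assoc\<close>)
next
  case (Suc m)
  then show ?case
    using self_similar by (auto simp: mult.assoc)
qed

lemma K\<^sub>3_subset: "K\<^sub>3 \<subseteq> K"
  using self_similar by blast

lemma attractor_bounds:
  assumes "x \<in> K"
  shows "0 \<le> x" "x \<le> 1"
proof -
  obtain M where M: "M \<in> K" "\<forall>y\<in>K. y \<le> M"
    using compact_attains_sup[OF compact_K K_nonempty] by blast
  obtain l where l: "l \<in> K" "\<forall>y\<in>K. l \<le> y"
    using compact_attains_inf[OF compact_K K_nonempty] by blast
  have "M \<le> 1"
    using M(1)
  proof (cases rule: attractor_cases)
    case (1 y)
    then show ?thesis
      using M t_pos t_small le_mult_self_imp_nonpos[of t M] by (simp add: mult_left_mono)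
  next
    case (2 y)
    then show ?thesis
      using M b_pos b_small le_mult_self_imp_nonpos[of b M] by (simp add: mult_left_mono)
  next
    case 3
    then show ?thesis using M by auto
  qed
  moreover have "0 \<le> l"
    using l(1)
  proof (cases rule: attractor_cases)
    case (1 y)
    then show ?thesis
      using l t_pos t_small mult_self_le_imp_nonneg[of t l] by (simp add: mult_left_mono)
  next
    case (2 y)
    then show ?thesis
      using l b_pos b_small mult_self_le_imp_nonneg[of b l] by (simp add: mult_left_mono)
  next
    case 3
    then show ?thesis using l by force
  qed
  ultimately show "0 \<le> x" "x \<le> 1"
    using assms M(2) l(2) by force+
qed

lemma zero_mem: "0 \<in> K"
proof -
  obtain l where l: "l \<in> K" "\<forall>y\<in>K. l \<le> y"
    using compact_attains_inf[OF compact_K K_nonempty] by blast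
  have "l \<le> t * l"
    using l scaled_mem[of l 1 0] by simp
  then have "l = 0"
    using le_mult_self_imp_nonpos[of t l] attractor_bounds(1)[OF l(1)] t_small by simp
  then show ?thesis using l by simp
qed

lemma K\<^sub>3_bounds:
  assumes "y \<in> K\<^sub>3"
  shows "8/9 \<le> y" "y \<le> 1"
  using assms attractor_bounds by auto

text \<open>Each of the three maps contracts by at least \<open>1/9\<close>, so a point above \<open>(1/9)\<^sup>k\<close> lands in
  \<open>K\<^sub>3\<close> after at most \<open>k\<close> inverse steps.\<close>

lemma address_above_level:
  assumes "x \<in> K" "(1/9) ^ k < x"
  shows "\<exists>m n. \<exists>y\<in>K\<^sub>3. x = t ^ m * (b ^ n * y)"
  using assms
proof (induction k arbitrary: x)
  case 0
  then show ?case using attractor_bounds[of x] by simp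
next
  case (Suc k)
  have above: "(1/9) ^ k < y" if "y \<in> K" "x = c * y" "0 < c" "c < 1/9" for c y
  proof (rule ccontr)
    assume "\<not> (1/9) ^ k < y"
    then have "c * y \<le> (1/9) * (1/9) ^ k"
      using that attractor_bounds(1)[of y] by (intro mult_mono) auto
    then show False using Suc.prems that by simp
  qed
  from Suc.prems(1) show ?case
  proof (cases rule: attractor_cases)
    case (1 y)
    with Suc.IH above t_pos t_small obtain m n z where "z \<in> K\<^sub>3" "y = t ^ m * (b ^ n * z)"
      by blast
    with 1 show ?thesis
      by (intro exI[of _ "Suc m"] exI[of _ n] bexI[of _ z]) auto
  next
    case (2 y)
    with Suc.IH above b_pos b_small obtain m n z where "z \<in> K\<^sub>3" "y = t ^ m * (b ^ n * z)"
      by blast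
    with 2 show ?thesis
      by (intro exI[of _ m] exI[of _ "Suc n"] bexI[of _ z]) auto
  next
    case 3
    then show ?thesis by (intro exI[of _ 0] exI[of _ 0] bexI[of _ x]) auto
  qed
qed

lemma address_exists:
  assumes "x \<in> K" "x \<noteq> 0"
  obtains m n y where "y \<in> K\<^sub>3" "x = t ^ m * (b ^ n * y)"
proof -
  have "0 < x" using assms attractor_bounds(1)[of x] by simp
  then obtain k where "(1/9 :: real) ^ k < x"
    using real_arch_pow_inv[of x "1/9"] by auto
  then show ?thesis
    using address_above_level assms(1) that by blast
qed

lemma attractor_eq_Union:
  "K = {0} \<union> (\<Union>m. \<Union>n. (\<lambda>x. t ^ m * x) ` (\<lambda>x. b ^ n * x) ` K\<^sub>3)"
proof (intro equalityI subsetI)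
  fix x assume "x \<in> K"
  show "x \<in> {0} \<union> (\<Union>m. \<Union>n. (\<lambda>x. t ^ m * x) ` (\<lambda>x. b ^ n * x) ` K\<^sub>3)"
  proof (cases "x = 0")
    case False
    with \<open>x \<in> K\<close> obtain m n y where "y \<in> K\<^sub>3" "x = t ^ m * (b ^ n * y)"
      by (rule address_exists)
    then show ?thesis by blast
  qed simp
next
  fix x assume "x \<in> {0} \<union> (\<Union>m. \<Union>n. (\<lambda>x. t ^ m * x) ` (\<lambda>x. b ^ n * x) ` K\<^sub>3)"
  then consider "x = 0" | m n y where "y \<in> K\<^sub>3" "x = t ^ m * (b ^ n * y)"
    by auto
  then show "x \<in> K"
  proof cases
    case 2
    then show ?thesis using scaled_mem K\<^sub>3_subset by blast
  qed (simp add: zero_mem)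
qed

definition no_overlap :: bool where
  "no_overlap \<longleftrightarrow>
    (\<forall>m n. 0 < m \<longrightarrow> 0 < n \<longrightarrow> (\<lambda>x. t ^ m * x) ` K\<^sub>3 \<inter> (\<lambda>x. b ^ n * x) ` K\<^sub>3 = {})"

lemma scaled_K\<^sub>3_notin_K\<^sub>3:
  assumes "y \<in> K\<^sub>3" "z \<in> K\<^sub>3" "(m, n) \<noteq> (0, 0)"
  shows "t ^ m * (b ^ n * y) \<noteq> z"
proof -
  have "t ^ m * b ^ n < 1/9"
    using assms(3) t_pos t_small b_pos b_small by (intro mult_powers_less) auto
  then have "t ^ m * b ^ n * y < 1/9"
    using K\<^sub>3_bounds[OF assms(1)] t_pos b_pos
    by (metis mult_left_le order_le_less_trans less_imp_le zero_le_mult_iff zero_le_power)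
  then show ?thesis
    using K\<^sub>3_bounds[OF assms(2)] by (auto simp: mult.assoc)
qed

lemma address_unique_reduced:
  assumes no_overlap "y \<in> K\<^sub>3" "y' \<in> K\<^sub>3" "m = 0 \<or> m' = 0" "n = 0 \<or> n' = 0"
    and eq: "t ^ m * (b ^ n * y) = t ^ m' * (b ^ n' * y')"
  shows "m = m' \<and> n = n'"
proof (rule ccontr)
  assume ne: "\<not> (m = m' \<and> n = n')"
  have "(m, n) = (0, 0) \<or> (m', n') = (0, 0) \<or> (0 < m \<and> 0 < n') \<or> (0 < m' \<and> 0 < n)"
    using assms(4,5) by auto
  then show False
  proof (elim disjE)
    assume "(m, n) = (0, 0)"
    then show False
      using scaled_K\<^sub>3_notin_K\<^sub>3[OF assms(3,2), of m' n'] ne eq by auto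
  next
    assume "(m', n') = (0, 0)"
    then show False
      using scaled_K\<^sub>3_notin_K\<^sub>3[OF assms(2,3), of m n] ne eq by auto
  next
    assume "0 < m \<and> 0 < n'"
    moreover from this have "t ^ m * y = b ^ n' * y'"
      using assms(4,5) eq by auto
    ultimately show False
      using assms(1-3) unfolding no_overlap_def by blast
  next
    assume "0 < m' \<and> 0 < n"
    moreover from this have "t ^ m' * y' = b ^ n * y"
      using assms(4,5) eq by auto
    ultimately show False
      using assms(1-3) unfolding no_overlap_def by blast
  qed
qed

lemma address_unique:
  assumes no_overlap "y \<in> K\<^sub>3" "y' \<in> K\<^sub>3"
    and eq: "t ^ m * (b ^ n * y) = t ^ m' * (b ^ n' * y')"
  shows "m = m' \<and> n = n'"
proof -
  define p q where "p = min m m'" and "q = min n n'"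
  have split: "t ^ m = t ^ p * t ^ (m - p)" "t ^ m' = t ^ p * t ^ (m' - p)"
    "b ^ n = b ^ q * b ^ (n - q)" "b ^ n' = b ^ q * b ^ (n' - q)"
    unfolding p_def q_def by (simp_all flip: power_add)
  have "t ^ p * b ^ q * (t ^ (m - p) * (b ^ (n - q) * y))
      = t ^ p * b ^ q * (t ^ (m' - p) * (b ^ (n' - q) * y'))"
    using eq unfolding split by (simp only: ac_simps)
  then have "t ^ (m - p) * (b ^ (n - q) * y) = t ^ (m' - p) * (b ^ (n' - q) * y')"
    using t_pos b_pos by simp
  moreover have "m - p = 0 \<or> m' - p = 0" "n - q = 0 \<or> n' - q = 0"
    unfolding p_def q_def by auto
  ultimately have "m - p = m' - p \<and> n - q = n' - q"
    using address_unique_reduced[OF assms(1-3)] by blast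
  then show ?thesis
    unfolding p_def q_def by linarith
qed

lemma no_overlap_iff_pieces_disjoint:
  "no_overlap \<longleftrightarrow> (\<forall>m n m' n'. (m, n) \<noteq> (m', n') \<longrightarrow>
     (\<lambda>x. t ^ m * x) ` (\<lambda>x. b ^ n * x) ` K\<^sub>3 \<inter> (\<lambda>x. t ^ m' * x) ` (\<lambda>x. b ^ n' * x) ` K\<^sub>3 = {})"
proof
  assume no_overlap
  then show "\<forall>m n m' n'. (m, n) \<noteq> (m', n') \<longrightarrow>
     (\<lambda>x. t ^ m * x) ` (\<lambda>x. b ^ n * x) ` K\<^sub>3 \<inter> (\<lambda>x. t ^ m' * x) ` (\<lambda>x. b ^ n' * x) ` K\<^sub>3 = {}"
    using address_unique by (fastforce simp: image_image)
next
  assume disjoint: "\<forall>m n m' n'. (m, n) \<noteq> (m', n') \<longrightarrow>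
     (\<lambda>x. t ^ m * x) ` (\<lambda>x. b ^ n * x) ` K\<^sub>3 \<inter> (\<lambda>x. t ^ m' * x) ` (\<lambda>x. b ^ n' * x) ` K\<^sub>3 = {}"
  show no_overlap
    unfolding no_overlap_def
  proof (intro allI impI)
    fix m n :: nat
    assume "0 < m" "0 < n"
    then show "(\<lambda>x. t ^ m * x) ` K\<^sub>3 \<inter> (\<lambda>x. b ^ n * x) ` K\<^sub>3 = {}"
      using disjoint[rule_format, of m 0 0 n] by simp
  qed
qed

lemma no_overlap_iff_cylinders_inter:
  "no_overlap \<longleftrightarrow> (\<forall>m n. 0 < m \<longrightarrow> 0 < n \<longrightarrow>
     (\<lambda>x. t ^ m * x) ` K \<inter> (\<lambda>x. b ^ n * x) ` K = (\<lambda>x. t ^ m * x) ` (\<lambda>x. b ^ n * x) ` K)"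
  (is "_ \<longleftrightarrow> (\<forall>m n. _ \<longrightarrow> _ \<longrightarrow> ?inter m n)")
proof
  assume no_overlap
  show "\<forall>m n. 0 < m \<longrightarrow> 0 < n \<longrightarrow> ?inter m n"
  proof (intro allI impI equalityI subsetI)
    fix m n :: nat and x
    assume "x \<in> (\<lambda>x. t ^ m * x) ` (\<lambda>x. b ^ n * x) ` K"
    then obtain k where "k \<in> K" "x = t ^ m * (b ^ n * k)" by auto
    moreover have "t ^ m * (b ^ 0 * k) \<in> K" "t ^ 0 * (b ^ n * k) \<in> K"
      using scaled_mem \<open>k \<in> K\<close> by blast+
    ultimately show "x \<in> (\<lambda>x. t ^ m * x) ` K \<inter> (\<lambda>x. b ^ n * x) ` K"
      by (auto simp: algebra_simps intro!: image_eqI)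
  next
    fix m n :: nat and x
    assume "x \<in> (\<lambda>x. t ^ m * x) ` K \<inter> (\<lambda>x. b ^ n * x) ` K"
    then obtain y z where yz: "y \<in> K" "z \<in> K" "x = t ^ m * y" "x = b ^ n * z" by auto
    show "x \<in> (\<lambda>x. t ^ m * x) ` (\<lambda>x. b ^ n * x) ` K"
    proof (cases "y = 0")
      case True
      then show ?thesis using yz zero_mem by (auto intro!: image_eqI[of _ _ 0])
    next
      case False
      then have "z \<noteq> 0" using yz t_pos b_pos by auto
      obtain p q u where u: "u \<in> K\<^sub>3" "y = t ^ p * (b ^ q * u)"
        using address_exists[OF yz(1) False] .
      obtain p' q' v where v: "v \<in> K\<^sub>3" "z = t ^ p' * (b ^ q' * v)"
        using address_exists[OF yz(2) \<open>z \<noteq> 0\<close>] .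
      have "t ^ m * y = b ^ n * z"
        using yz by simp
      then have "t ^ (m + p) * (b ^ q * u) = t ^ p' * (b ^ (q' + n) * v)"
        unfolding u(2) v(2) by (simp add: power_add ac_simps)
      then have "q = q' + n"
        using address_unique[OF \<open>no_overlap\<close> u(1) v(1)] by simp
      then have "x = t ^ m * (b ^ n * (t ^ p * (b ^ q' * u)))"
        unfolding yz(3) u(2) by (simp add: power_add ac_simps)
      moreover have "t ^ p * (b ^ q' * u) \<in> K"
        using scaled_mem K\<^sub>3_subset u by blast
      ultimately show ?thesis by auto
    qed
  qed
next
  assume inter: "\<forall>m n. 0 < m \<longrightarrow> 0 < n \<longrightarrow> ?inter m n"
  show no_overlap
    unfolding no_overlap_def
  proof (intro allI impI equals0I)
    fix m n :: nat and x
    assume mn: "0 < m" "0 < n"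
      and "x \<in> (\<lambda>x. t ^ m * x) ` K\<^sub>3 \<inter> (\<lambda>x. b ^ n * x) ` K\<^sub>3"
    then obtain y z where yz: "y \<in> K\<^sub>3" "z \<in> K\<^sub>3" and eq: "t ^ m * y = b ^ n * z"
      by auto
    have "t ^ m * y \<in> (\<lambda>x. t ^ m * x) ` K \<inter> (\<lambda>x. b ^ n * x) ` K"
      using yz K\<^sub>3_subset eq by blast
    then obtain w where w: "w \<in> K" "t ^ m * y = t ^ m * (b ^ n * w)"
      using inter mn by auto
    then have "y = b ^ n * w" using t_pos by simp
    moreover have "b ^ n * w \<le> b ^ n"
      using attractor_bounds[OF w(1)] b_pos by (simp add: mult_left_le)
    moreover have "b ^ n \<le> b"
      using mn b_pos b_small by (simp add: power_decreasing[of 1 n b, simplified])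
    ultimately show False using K\<^sub>3_bounds(1)[OF yz(1)] b_small by simp
  qed
qed

end

theorem proposition8:
  fixes b t :: real and S1 S2 S3 :: "real \<Rightarrow> real" and K K3 :: "real set"
  assumes "0 < b" "b < 1/9" "0 < t" "t < 1/9"
    and "S1 = (\<lambda>x. t * x)" "S2 = (\<lambda>x. b * x)" "S3 = (\<lambda>x. (x + 8) / 9)"
    and "compact K" "K \<noteq> {}" "K = S1 ` K \<union> S2 ` K \<union> S3 ` K"
    and "K3 = S3 ` K"
  shows "((\<forall>m n::nat. m > 0 \<longrightarrow> n > 0 \<longrightarrow>
            (S1 ^^ m) ` K3 \<inter> (S2 ^^ n) ` K3 = {})
         \<longleftrightarrow>
          (K = {0} \<union> (\<Union>m::nat. \<Union>n::nat. (S1 ^^ m) ` (S2 ^^ n) ` K3) \<and>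
           (\<forall>m n m' n' :: nat. (m, n) \<noteq> (m', n') \<longrightarrow>
              (S1 ^^ m) ` (S2 ^^ n) ` K3 \<inter> (S1 ^^ m') ` (S2 ^^ n') ` K3 = {})))
       \<and>
         ((\<forall>m n::nat. m > 0 \<longrightarrow> n > 0 \<longrightarrow>
            (S1 ^^ m) ` K3 \<inter> (S2 ^^ n) ` K3 = {})
         \<longleftrightarrow>
          (\<forall>m n::nat. m > 0 \<longrightarrow> n > 0 \<longrightarrow>
            (S1 ^^ m) ` K \<inter> (S2 ^^ n) ` K = (S1 ^^ m) ` (S2 ^^ n) ` K))"
proof -
  interpret two_scaling_attractor t b K
    using assms(1-10) by unfold_locales simp_all
  have S1_pow: "S1 ^^ m = (\<lambda>x. t ^ m * x)" and S2_pow: "S2 ^^ m = (\<lambda>x. b ^ m * x)" for m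
    using assms(5,6) funpow_times_power[where f = "\<lambda>_. m"] by simp_all
  show ?thesis
    unfolding S1_pow S2_pow assms(7,11) no_overlap_def[symmetric] attractor_eq_Union[symmetric]
      no_overlap_iff_pieces_disjoint[symmetric] no_overlap_iff_cylinders_inter[symmetric]
    by simp
qed

end
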